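(* Let $B = M \cup \{\omega_1,\ldots,\omega_p\}$ with $p\ge 1$ and $\omega_1,\ldots,\omega_p \in P_2\setminus M$, where gates computing functions of $M$ have weight $0$ and gates computing $\omega_1,\ldots,\omega_p$ have weight $1$. Then there exists a constant $c(B)$ (depending only on $B$) such that for every finite system $F=\{f_1(x_1,\ldots,x_n),\ldots,f_m(x_1,\ldots,x_n)\}$ of Boolean functions $$\left\lceil \log_2 (d(F)+1)\right\rceil - c(B) \;\le\; I_B(F) \;\le\; \left\lceil \log_2 (d(F)+1)\right\rceil .$$
   Context: $P_2$ denotes the set of all Boolean functions and $M\subset P_2$ the set of all monotone Boolean functions (including the constants). Tuples in $E_2^n=\{0,1\}^n$ are compared componentwise: $\tilde\alpha\le\tilde\beta$ iff $\alpha_j\le\beta_j$ for all $j$. An increasing chain is a sequence of pairwise distinct tuples $\tilde\alpha_1,\ldots,\tilde\alpha_r\in E_2^n$ with $\tilde\alpha_i\le\tilde\alpha_{i+1}$ for $i=1,\ldots,r-1$. For a Boolean function $f$ of $x_1,\ldots,x_n$, an ordered pair $(\tilde\alpha,\tilde\beta)$ of tuples with $\tilde\alpha\le\tilde\beta$ and $f(\tilde\alpha)>f(\tilde\beta)$ is a jump of $f$; for a system $F$ of functions of $x_1,\ldots,x_n$, a pair is a jump of $F$ if it is a jump of some $f\in F$. For a chain $C=(\tilde\alpha_1,\ldots,\tilde\alpha_r)$, the decrease $d_C(F)$ is the number of indices $i$ such that $(\tilde\alpha_i,\tilde\alpha_{i+1})$ is a jump of $F$, and the decrease $d(F)$ is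 the maximum of $d_C(F)$ over all chains $C$ (for a single function $f$, $d(f)=d(\{f\})$). A circuit over $B$ is a Boolean circuit (directed acyclic graph of gates with inputs $x_1,\ldots,x_n$) each of whose gates computes a function of $B$; it realizes $F$ if each $f_i$ is computed at some gate or input. Its weight is the number of gates computing functions among $\omega_1,\ldots,\omega_p$. The inversion complexity $I_B(F)$ is the minimum weight of a circuit over $B$ realizing $F$. *)

theory Defs
  imports Complex_Main
begin

text \<open>Tuples of E_2^n are boolean lists of length n; a Boolean function of
x_1..x_n is a map bool list => bool (only its values on length-n lists matter).
The order on bool is False < True.\<close>

definition tuple_le :: "bool list \<Rightarrow> bool list \<Rightarrow> bool" where
  "tuple_le a b \<longleftrightarrow> length a = length b \<and> (\<forall>i<length a. a ! i \<le> b ! i)"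

definition monotone_fun :: "nat \<Rightarrow> (bool list \<Rightarrow> bool) \<Rightarrow> bool" where
  "monotone_fun k h \<longleftrightarrow>
     (\<forall>a b. length a = k \<longrightarrow> length b = k \<longrightarrow> tuple_le a b \<longrightarrow> h a \<le> h b)"

text \<open>The non-monotone basis functions omega_1..omega_p are given as a list
of (arity, function) pairs.  A gate is labelled either by an arbitrary monotone
function (weight 0) or by an index j of omega_(j+1) (weight 1).\<close>
datatype glabel = Mono "bool list \<Rightarrow> bool" | Om nat

type_synonym basis_om = "(nat \<times> (bool list \<Rightarrow> bool)) list"
type_synonym circuit = "(glabel \<times> nat list) list"

definition apply_label :: "basis_om \<Rightarrow> glabel \<Rightarrow> bool list \<Rightarrow> bool" where
  "apply_label om l vs = (case l of Mono h \<Rightarrow> h vs | Om j \<Rightarrow> snd (om ! j) vs)"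

text \<open>Node values: nodes 0..n-1 are the inputs, node n+i is gate i.\<close>
fun run :: "basis_om \<Rightarrow> circuit \<Rightarrow> bool list \<Rightarrow> bool list" where
  "run om [] vals = vals"
| "run om ((l, args) # gs) vals =
     run om gs (vals @ [apply_label om l (map (\<lambda>i. vals ! i) args)])"

definition valid_circuit :: "basis_om \<Rightarrow> nat \<Rightarrow> circuit \<Rightarrow> bool" where
  "valid_circuit om n gs \<longleftrightarrow>
     (\<forall>i<length gs. (\<forall>a\<in>set (snd (gs ! i)). a < n + i) \<and>
        (case fst (gs ! i) of
           Mono h \<Rightarrow> monotone_fun (length (snd (gs ! i))) h
         | Om j \<Rightarrow> j < length om \<and> length (snd (gs ! i)) = fst (om ! j)))"

definition realizes :: "basis_om \<Rightarrow> nat \<Rightarrow> circuit \<Rightarrow> (bool list \<Rightarrow> bool) list \<Rightarrow> bool" where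
  "realizes om n gs fs \<longleftrightarrow>
     (\<forall>f\<in>set fs. \<exists>v < n + length gs. \<forall>x. length x = n \<longrightarrow> run om gs x ! v = f x)"

definition weight :: "circuit \<Rightarrow> nat" where
  "weight gs = length (filter (\<lambda>g. case fst g of Om _ \<Rightarrow> True | Mono _ \<Rightarrow> False) gs)"

definition inv_complexity :: "basis_om \<Rightarrow> nat \<Rightarrow> (bool list \<Rightarrow> bool) list \<Rightarrow> nat" where
  "inv_complexity om n fs =
     (LEAST w. \<exists>gs. valid_circuit om n gs \<and> realizes om n gs fs \<and> weight gs = w)"

definition is_chain :: "nat \<Rightarrow> bool list list \<Rightarrow> bool" where
  "is_chain n C \<longleftrightarrow> C \<noteq> [] \<and> distinct C \<and> (\<forall>a\<in>set C. length a = n) \<and>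
     (\<forall>i. Suc i < length C \<longrightarrow> tuple_le (C ! i) (C ! Suc i))"

definition jump :: "(bool list \<Rightarrow> bool) \<Rightarrow> bool list \<Rightarrow> bool list \<Rightarrow> bool" where
  "jump f a b \<longleftrightarrow> tuple_le a b \<and> f a > f b"

definition jumpF :: "(bool list \<Rightarrow> bool) list \<Rightarrow> bool list \<Rightarrow> bool list \<Rightarrow> bool" where
  "jumpF fs a b \<longleftrightarrow> (\<exists>f\<in>set fs. jump f a b)"

definition decr_chain :: "(bool list \<Rightarrow> bool) list \<Rightarrow> bool list list \<Rightarrow> nat" where
  "decr_chain fs C = card {i. Suc i < length C \<and> jumpF fs (C ! i) (C ! Suc i)}"

definition decrease :: "nat \<Rightarrow> (bool list \<Rightarrow> bool) list \<Rightarrow> nat" where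
  "decrease n fs = Max {decr_chain fs C | C. is_chain n C}"

end

theory Submission
  imports Defs
begin

text \<open>
  Lower bound: if all \<open>\<omega>\<close>-gates output the same values at two tuples \<open>x \<le> y\<close>, every node of
  the circuit is monotone between them, so along a chain every jump of \<open>F\<close> forces a change of the
  set of true \<open>\<omega>\<close>-gates. Going through the gates in order: while the values of the earlier
  \<open>\<omega>\<close>-gates are fixed, the arguments of an \<open>\<omega>\<close>-gate only increase along the chain, so it switches
  at most arity-many times. With \<open>K\<close> bounding the arities, a chain therefore sees at most
  \<open>K (2^w - 1)\<close> pattern changes in a circuit with \<open>w\<close> \<open>\<omega>\<close>-gates, i.e. \<open>d(F) + 1 \<le> 2^(w + K)\<close>.

  Upper bound: the level of \<open>x\<close>, the largest decrease of a chain ending at \<open>x\<close>, is monotone,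
  grows at every jump and is below \<open>2^r\<close> for \<open>r = \<lceil>log\<^sub>2 (d(F) + 1)\<rceil>\<close>. Its binary digits are
  computed from the most significant one on: each digit is a monotone function of \<open>x\<close> and the
  negations of the earlier digits, and each negation costs one \<open>\<omega>\<close>-gate. Every \<open>f \<in> F\<close> is then
  monotone in \<open>x\<close> and all negated digits, because these determine the level and \<open>F\<close> has no
  jump inside a level set.
\<close>

section \<open>Tuples and circuit evaluation\<close>

lemma tuple_le_refl: "tuple_le a a"
  by (simp add: tuple_le_def)

lemma tuple_le_trans: "tuple_le a b \<Longrightarrow> tuple_le b c \<Longrightarrow> tuple_le a c"
  unfolding tuple_le_def by (metis order_trans)

lemma tuple_le_antisym: "tuple_le a b \<Longrightarrow> tuple_le b a \<Longrightarrow> a = b"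
  unfolding tuple_le_def by (metis nth_equalityI order_antisym)

lemma tuple_le_append:
  assumes len: "length a1 = length b1"
  shows "tuple_le (a1 @ a2) (b1 @ b2) \<longleftrightarrow> tuple_le a1 b1 \<and> tuple_le a2 b2"
proof
  assume le: "tuple_le (a1 @ a2) (b1 @ b2)"
  then have le_nth: "\<And>i. i < length a1 + length a2 \<Longrightarrow> (a1 @ a2) ! i \<le> (b1 @ b2) ! i"
    by (simp add: tuple_le_def)
  have "length a2 = length b2"
    using le len by (simp add: tuple_le_def)
  then show "tuple_le a1 b1 \<and> tuple_le a2 b2"
    unfolding tuple_le_def
  proof (intro conjI allI impI len)
    fix i assume "i < length a1"
    then show "a1 ! i \<le> b1 ! i"
      using le_nth[of i] len by (simp add: nth_append)
  next
    fix i assume "i < length a2"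
    then show "a2 ! i \<le> b2 ! i"
      using le_nth[of "length a1 + i"] len by (simp add: nth_append)
  qed
next
  assume "tuple_le a1 b1 \<and> tuple_le a2 b2"
  then show "tuple_le (a1 @ a2) (b1 @ b2)"
    using len by (auto simp: tuple_le_def nth_append)
qed

lemma tuple_le_map_map: "tuple_le (map f xs) (map g xs) \<longleftrightarrow> (\<forall>a\<in>set xs. f a \<le> g a)"
  unfolding tuple_le_def by (auto simp: in_set_conv_nth) (metis nth_mem)

lemma length_run: "length (run om gs vals) = length vals + length gs"
  by (induction gs arbitrary: vals) auto

lemma run_append: "run om (gs @ hs) vals = run om hs (run om gs vals)"
  by (induction gs arbitrary: vals) auto

lemma nth_run_prefix: "v < length vals \<Longrightarrow> run om gs vals ! v = vals ! v"
  by (induction gs arbitrary: vals) (auto simp: nth_append)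

lemma nth_run_gate:
  assumes i: "i < length gs" and args: "\<forall>a\<in>set (snd (gs ! i)). a < length vals + i"
  shows "run om gs vals ! (length vals + i) =
           apply_label om (fst (gs ! i)) (map ((!) (run om gs vals)) (snd (gs ! i)))"
proof -
  define W where "W = run om (take i gs) vals"
  have lW: "length W = length vals + i"
    using i by (simp add: W_def length_run)
  have "gs = take i gs @ (fst (gs ! i), snd (gs ! i)) # drop (Suc i) gs"
    using i by (simp add: Cons_nth_drop_Suc)
  then have run_gs: "run om gs vals = run om (drop (Suc i) gs)
      (W @ [apply_label om (fst (gs ! i)) (map ((!) W) (snd (gs ! i)))])"
    unfolding W_def by (metis run.simps(2) run_append)
  have "run om gs vals ! (length vals + i) =
          apply_label om (fst (gs ! i)) (map ((!) W) (snd (gs ! i)))"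
    by (simp add: run_gs nth_run_prefix flip: lW)
  also have "map ((!) W) (snd (gs ! i)) = map ((!) (run om gs vals)) (snd (gs ! i))"
    using args lW by (auto simp: run_gs nth_run_prefix nth_append)
  finally show ?thesis .
qed

lemma run_independent_gates:
  assumes "\<forall>g\<in>set gs. \<forall>a\<in>set (snd g). a < length vals"
  shows "run om gs vals = vals @ map (\<lambda>g. apply_label om (fst g) (map ((!) vals) (snd g))) gs"
  using assms
proof (induction gs arbitrary: vals)
  case (Cons g gs)
  define v where "v = apply_label om (fst g) (map ((!) vals) (snd g))"
  have "run om (g # gs) vals = run om gs (vals @ [v])"
    by (cases g) (simp add: v_def)
  also have "\<dots> = (vals @ [v]) @
      map (\<lambda>h. apply_label om (fst h) (map ((!) (vals @ [v])) (snd h))) gs"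
    using Cons by (intro Cons.IH) (auto simp: less_Suc_eq)
  also have "map (\<lambda>h. apply_label om (fst h) (map ((!) (vals @ [v])) (snd h))) gs =
             map (\<lambda>h. apply_label om (fst h) (map ((!) vals) (snd h))) gs"
    using Cons.prems by (auto simp: nth_append intro!: map_cong arg_cong[where f = "apply_label om _"])
  finally show ?case
    by (simp add: v_def)
qed simp

definition valid_gate :: "basis_om \<Rightarrow> nat \<Rightarrow> glabel \<times> nat list \<Rightarrow> bool" where
  "valid_gate om m g \<longleftrightarrow> (\<forall>a\<in>set (snd g). a < m) \<and>
     (case fst g of
        Mono h \<Rightarrow> monotone_fun (length (snd g)) h
      | Om j \<Rightarrow> j < length om \<and> length (snd g) = fst (om ! j))"

lemma valid_circuit_iff_gates:
  "valid_circuit om n gs \<longleftrightarrow> (\<forall>i<length gs. valid_gate om (n + i) (gs ! i))"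
  by (simp add: valid_circuit_def valid_gate_def)

lemma valid_circuit_Nil: "valid_circuit om n []"
  by (simp add: valid_circuit_def)

lemma valid_gate_mono: "valid_gate om m g \<Longrightarrow> m \<le> m' \<Longrightarrow> valid_gate om m' g"
  unfolding valid_gate_def by (meson order_less_le_trans)

lemma valid_circuit_append:
  "valid_circuit om n (gs @ hs) \<longleftrightarrow> valid_circuit om n gs \<and> valid_circuit om (n + length gs) hs"
proof -
  have "(\<forall>i<length gs + length hs. valid_gate om (n + i) ((gs @ hs) ! i)) \<longleftrightarrow>
        (\<forall>i<length gs. valid_gate om (n + i) (gs ! i)) \<and>
        (\<forall>i<length hs. valid_gate om (n + length gs + i) (hs ! i))" (is "?L \<longleftrightarrow> ?R")
  proof
    assume L: ?L
    show ?R
    proof (intro conjI allI impI)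
      fix i assume "i < length gs"
      then show "valid_gate om (n + i) (gs ! i)"
        using L[rule_format, of i] by (simp add: nth_append)
    next
      fix i assume "i < length hs"
      then show "valid_gate om (n + length gs + i) (hs ! i)"
        using L[rule_format, of "length gs + i"] by (simp add: nth_append add.assoc)
    qed
  next
    assume R: ?R
    show ?L
    proof (intro allI impI)
      fix i assume "i < length gs + length hs"
      then show "valid_gate om (n + i) ((gs @ hs) ! i)"
        using R[THEN conjunct2, rule_format, of "i - length gs"] R
        by (cases "i < length gs") (auto simp: nth_append)
    qed
  qed
  then show ?thesis
    by (simp add: valid_circuit_iff_gates)
qed

lemma valid_circuit_Cons:
  "valid_circuit om n (g # gs) \<longleftrightarrow> valid_gate om n g \<and> valid_circuit om (Suc n) gs"
  using valid_circuit_append[of om n "[g]" gs] by (simp add: valid_circuit_iff_gates)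

lemma valid_circuit_if_gates_valid:
  "\<forall>g\<in>set gs. valid_gate om m g \<Longrightarrow> valid_circuit om m gs"
  unfolding valid_circuit_iff_gates by (meson le_add1 nth_mem valid_gate_mono)

lemma nth_run_node:
  assumes "valid_circuit om n gs" "length x = n" "i < length gs"
  shows "run om gs x ! (n + i) = apply_label om (fst (gs ! i)) (map ((!) (run om gs x)) (snd (gs ! i)))"
  using assms nth_run_gate[of i gs x om] by (auto simp: valid_circuit_def)

lemma weight_append: "weight (gs @ hs) = weight gs + weight hs"
  by (simp add: weight_def)

section \<open>Chains and their decrease\<close>

lemma is_chain_nth_le:
  assumes "is_chain n C" "i \<le> j" "j < length C"
  shows "tuple_le (C ! i) (C ! j)"
  using assms(2,3)
proof (induction j)
  case (Suc j)
  show ?case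
  proof (cases "i = Suc j")
    case False
    then have "tuple_le (C ! i) (C ! j)"
      using Suc by simp
    moreover have "tuple_le (C ! j) (C ! Suc j)"
      using assms(1) Suc.prems by (simp add: is_chain_def)
    ultimately show ?thesis
      by (rule tuple_le_trans)
  qed (simp add: tuple_le_refl)
qed (simp add: tuple_le_refl)

lemma length_chain_nth: "is_chain n C \<Longrightarrow> s < length C \<Longrightarrow> length (C ! s) = n"
  by (simp add: is_chain_def)

lemma length_chain_le: "is_chain n C \<Longrightarrow> length C \<le> 2 ^ n"
proof -
  assume ch: "is_chain n C"
  have "set C \<subseteq> {xs. set xs \<subseteq> (UNIV :: bool set) \<and> length xs = n}"
    using ch by (auto simp: is_chain_def)
  then have "card (set C) \<le> card {xs. set xs \<subseteq> (UNIV :: bool set) \<and> length xs = n}"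
    by (rule card_mono[rotated]) (use finite_lists_length_eq[of "UNIV :: bool set" n] in simp)
  also have "\<dots> = 2 ^ n"
    using card_lists_length_eq[of "UNIV :: bool set" n] by simp
  finally show ?thesis
    using ch distinct_card[of C] by (simp add: is_chain_def)
qed

lemma decr_chain_le_length: "decr_chain fs C \<le> length C"
proof -
  have "{i. Suc i < length C \<and> jumpF fs (C ! i) (C ! Suc i)} \<subseteq> {..<length C}"
    by auto
  then show ?thesis
    unfolding decr_chain_def by (metis card_lessThan card_mono finite_lessThan)
qed

lemma finite_decr_chains: "finite {decr_chain fs C | C. is_chain n C \<and> P C}"
proof (rule finite_subset[of _ "{..2 ^ n}"])
  show "{decr_chain fs C | C. is_chain n C \<and> P C} \<subseteq> {..2 ^ n}"
    using decr_chain_le_length length_chain_le le_trans by fastforce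
qed simp

lemma decr_chain_le_decrease: "is_chain n C \<Longrightarrow> decr_chain fs C \<le> decrease n fs"
  unfolding decrease_def using finite_decr_chains[of fs n "\<lambda>_. True"] by (intro Max_ge) auto

lemma decrease_attained: "\<exists>C. is_chain n C \<and> decr_chain fs C = decrease n fs"
proof -
  let ?D = "{decr_chain fs C | C. is_chain n C \<and> True}"
  have "is_chain n [replicate n False]"
    by (simp add: is_chain_def)
  then have "?D \<noteq> {}"
    by blast
  then have "Max ?D \<in> ?D"
    using finite_decr_chains by (rule Max_in[rotated])
  then show ?thesis
    unfolding decrease_def by auto
qed

section \<open>Lower bound: changes of the \<open>\<omega>\<close>-gate pattern\<close>

lemma true_positions_subset:
  "tuple_le u v \<Longrightarrow> {i. i < length u \<and> u ! i} \<subseteq> {i. i < length v \<and> v ! i}"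
  unfolding tuple_le_def by auto

lemma true_positions_psubset:
  assumes "tuple_le u v" "u \<noteq> v"
  shows "{i. i < length u \<and> u ! i} \<subset> {i. i < length v \<and> v ! i}"
proof -
  have "{i. i < length u \<and> u ! i} \<noteq> {i. i < length v \<and> v ! i}"
  proof
    assume eq: "{i. i < length u \<and> u ! i} = {i. i < length v \<and> v ! i}"
    have len: "length u = length v"
      using assms(1) by (simp add: tuple_le_def)
    have "u ! i = v ! i" if "i < length u" for i
    proof -
      from eq have "i \<in> {i. i < length u \<and> u ! i} \<longleftrightarrow> i \<in> {i. i < length v \<and> v ! i}"
        by simp
      then show ?thesis
        using that len by auto
    qed
    then show False
      using assms(2) len nth_equalityI by blast
  qed
  then show ?thesis
    using true_positions_subset[OF assms(1)] by blast
qed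

lemma card_le_of_increasing_steps:
  fixes c :: "nat \<Rightarrow> nat"
  assumes step: "\<And>s. s \<in> A \<Longrightarrow> c s < c (Suc s)"
    and between: "\<And>s s'. s \<in> A \<Longrightarrow> s' \<in> A \<Longrightarrow> s < s' \<Longrightarrow> c (Suc s) \<le> c s'"
    and bound: "\<And>s. s \<in> A \<Longrightarrow> c (Suc s) \<le> k"
  shows "card A \<le> k"
proof -
  have less: "c (Suc s) < c (Suc s')" if "s \<in> A" "s' \<in> A" "s < s'" for s s'
    using between[OF that] step[OF that(2)] by simp
  have "inj_on (\<lambda>s. c (Suc s)) A"
    by (rule inj_onI) (metis less less_irrefl linorder_neqE_nat)
  moreover have "(\<lambda>s. c (Suc s)) ` A \<subseteq> {1..k}"
    using step bound by (fastforce simp: Suc_le_eq)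
  ultimately show ?thesis
    using card_inj_on_le[of "\<lambda>s. c (Suc s)" A "{1..k}"] by simp
qed

definition is_om_gate :: "glabel \<times> nat list \<Rightarrow> bool" where
  "is_om_gate g \<longleftrightarrow> (case fst g of Om _ \<Rightarrow> True | Mono _ \<Rightarrow> False)"

locale valid_circ =
  fixes om :: basis_om and n :: nat and gs :: circuit
  assumes valid: "valid_circuit om n gs"
begin

abbreviation node :: "bool list \<Rightarrow> nat \<Rightarrow> bool" where
  "node x v \<equiv> run om gs x ! v"

definition om_gates :: "nat \<Rightarrow> nat set" where
  "om_gates m = {i. i < m \<and> i < length gs \<and> is_om_gate (gs ! i)}"

definition om_pattern :: "nat \<Rightarrow> bool list \<Rightarrow> nat set" where
  "om_pattern m x = {i \<in> om_gates m. node x (n + i)}"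

definition pattern_changes :: "nat \<Rightarrow> bool list list \<Rightarrow> nat set" where
  "pattern_changes m C = {s. Suc s < length C \<and> om_pattern m (C ! s) \<noteq> om_pattern m (C ! Suc s)}"

definition om_switches :: "nat \<Rightarrow> bool list list \<Rightarrow> nat set \<Rightarrow> nat set" where
  "om_switches m C p = {s. Suc s < length C \<and> om_pattern m (C ! s) = p \<and> om_pattern m (C ! Suc s) = p \<and>
                          node (C ! s) (n + m) \<noteq> node (C ! Suc s) (n + m)}"

lemma finite_om_gates: "finite (om_gates m)"
  by (simp add: om_gates_def)

lemma weight_eq_card_om_gates: "weight gs = card (om_gates (length gs))"
  unfolding weight_def length_filter_conv_card om_gates_def is_om_gate_def by simp

lemma node_mono_within_pattern:
  assumes x: "length x = n" and y: "length y = n" and le: "tuple_le x y"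
    and pattern: "om_pattern m x = om_pattern m y"
  shows "v < n + m \<Longrightarrow> v < n + length gs \<Longrightarrow> node x v \<le> node y v"
proof (induction v rule: less_induct)
  case (less v)
  show ?case
  proof (cases "v < n")
    case True
    then show ?thesis
      using le x y by (simp add: nth_run_prefix tuple_le_def)
  next
    case False
    then obtain i where v: "v = n + i" and i: "i < m" "i < length gs"
      using less.prems by (metis add_less_cancel_left le_add_diff_inverse not_less)
    have gate: "valid_gate om (n + i) (gs ! i)"
      using valid i(2) by (simp add: valid_circuit_iff_gates)
    show ?thesis
    proof (cases "fst (gs ! i)")
      case (Mono h)
      have "tuple_le (map (node x) (snd (gs ! i))) (map (node y) (snd (gs ! i)))"
        unfolding tuple_le_map_map using gate less.IH less.prems v by (force simp: valid_gate_def)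
      moreover have "monotone_fun (length (snd (gs ! i))) h"
        using gate Mono by (simp add: valid_gate_def)
      ultimately have "h (map (node x) (snd (gs ! i))) \<le> h (map (node y) (snd (gs ! i)))"
        unfolding monotone_fun_def by (metis length_map)
      then show ?thesis
        using nth_run_node[OF valid x i(2)] nth_run_node[OF valid y i(2)] Mono
        by (simp add: v apply_label_def)
    next
      case (Om j)
      then have "i \<in> om_gates m"
        using i by (simp add: om_gates_def is_om_gate_def)
      then show ?thesis
        using pattern v by (auto simp: om_pattern_def set_eq_iff)
    qed
  qed
qed

lemma card_om_switches_within_pattern:
  assumes ch: "is_chain n C" and m: "m < length gs" and lab: "fst (gs ! m) = Om j"
  shows "card (om_switches m C p) \<le> fst (om ! j)"
proof -
  define args where "args = snd (gs ! m)"
  define vec where "vec s = map (node (C ! s)) args" for s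
  define c where "c s = card {i. i < length (vec s) \<and> vec s ! i}" for s
  have "valid_gate om (n + m) (gs ! m)"
    using valid m by (simp add: valid_circuit_iff_gates)
  then have args_lt: "\<forall>a\<in>set args. a < n + m" and arity: "length args = fst (om ! j)"
    using lab by (simp_all add: valid_gate_def args_def)
  have vec_mono: "tuple_le (vec s) (vec s')"
    if "s \<le> s'" "s' < length C" "om_pattern m (C ! s) = p" "om_pattern m (C ! s') = p" for s s'
    unfolding vec_def tuple_le_map_map
  proof
    fix a assume "a \<in> set args"
    then show "node (C ! s) a \<le> node (C ! s') a"
      using node_mono_within_pattern[OF length_chain_nth[OF ch] length_chain_nth[OF ch]
          is_chain_nth_le[OF ch that(1,2)], of m a] that args_lt m
      by fastforce
  qed
  have gate_val: "node (C ! s) (n + m) = snd (om ! j) (vec s)" if "s < length C" for s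
    using nth_run_node[OF valid length_chain_nth[OF ch that] m] lab
    by (simp add: apply_label_def args_def vec_def)
  show ?thesis
  proof (rule card_le_of_increasing_steps[of "om_switches m C p" c])
    fix s assume s: "s \<in> om_switches m C p"
    then have "vec s \<noteq> vec (Suc s)"
      using gate_val by (auto simp: om_switches_def)
    moreover have "tuple_le (vec s) (vec (Suc s))"
      using s vec_mono by (simp add: om_switches_def)
    ultimately show "c s < c (Suc s)"
      unfolding c_def by (intro psubset_card_mono true_positions_psubset) simp_all
  next
    fix s s' assume "s \<in> om_switches m C p" "s' \<in> om_switches m C p" "s < s'"
    then have "tuple_le (vec (Suc s)) (vec s')"
      using vec_mono[of "Suc s" s'] by (simp add: om_switches_def)
    then show "c (Suc s) \<le> c s'"
      unfolding c_def by (intro card_mono true_positions_subset) simp_all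
  next
    fix s
    have "{i. i < length (vec (Suc s)) \<and> vec (Suc s) ! i} \<subseteq> {..<fst (om ! j)}"
      using arity by (auto simp: vec_def)
    then show "c (Suc s) \<le> fst (om ! j)"
      unfolding c_def by (metis card_lessThan card_mono finite_lessThan)
  qed
qed

lemma finite_pattern_changes: "finite (pattern_changes m C)"
  by (rule finite_subset[of _ "{..<length C}"]) (auto simp: pattern_changes_def)

lemma om_pattern_subset: "om_pattern m x \<subseteq> om_gates m"
  by (auto simp: om_pattern_def)

lemma om_pattern_Suc:
  "m < length gs \<Longrightarrow> is_om_gate (gs ! m) \<Longrightarrow>
     om_pattern (Suc m) x = om_pattern m x \<union> {i. i = m \<and> node x (n + m)}"
  by (auto simp: om_pattern_def om_gates_def less_Suc_eq)

lemma om_gates_Suc_om: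
  "m < length gs \<Longrightarrow> is_om_gate (gs ! m) \<Longrightarrow> om_gates (Suc m) = insert m (om_gates m)"
  by (auto simp: om_gates_def less_Suc_eq)

lemma om_gates_Suc_non_om:
  "\<not> (m < length gs \<and> is_om_gate (gs ! m)) \<Longrightarrow> om_gates (Suc m) = om_gates m"
  by (auto simp: om_gates_def less_Suc_eq)

lemma pattern_changes_Suc_subset:
  assumes "m < length gs" "is_om_gate (gs ! m)"
  shows "pattern_changes (Suc m) C \<subseteq> pattern_changes m C \<union> (\<Union>p\<in>Pow (om_gates m). om_switches m C p)"
proof
  fix s assume s: "s \<in> pattern_changes (Suc m) C"
  show "s \<in> pattern_changes m C \<union> (\<Union>p\<in>Pow (om_gates m). om_switches m C p)"
  proof (cases "om_pattern m (C ! s) = om_pattern m (C ! Suc s)")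
    case True
    then have "node (C ! s) (n + m) \<noteq> node (C ! Suc s) (n + m)"
      using s om_pattern_Suc[OF assms] by (auto simp: pattern_changes_def)
    then have "s \<in> om_switches m C (om_pattern m (C ! s))"
      using s True by (simp add: om_switches_def pattern_changes_def)
    then show ?thesis
      using om_pattern_subset by blast
  qed (use s in \<open>simp add: pattern_changes_def\<close>)
qed

lemma card_pattern_changes_Suc_le:
  assumes ch: "is_chain n C" and K: "\<forall>j<length om. fst (om ! j) \<le> K"
    and m: "m < length gs" "is_om_gate (gs ! m)"
  shows "card (pattern_changes (Suc m) C) \<le> card (pattern_changes m C) + 2 ^ card (om_gates m) * K"
proof -
  obtain j where lab: "fst (gs ! m) = Om j"
    using m(2) by (cases "fst (gs ! m)") (auto simp: is_om_gate_def)
  have "valid_gate om (n + m) (gs ! m)"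
    using valid m by (simp add: valid_circuit_iff_gates)
  then have j: "j < length om"
    using lab by (simp add: valid_gate_def)
  have "finite (\<Union>p\<in>Pow (om_gates m). om_switches m C p)"
    by (rule finite_subset[of _ "{..<length C}"]) (auto simp: om_switches_def)
  then have "card (pattern_changes (Suc m) C) \<le>
             card (pattern_changes m C \<union> (\<Union>p\<in>Pow (om_gates m). om_switches m C p))"
    using pattern_changes_Suc_subset[OF m] finite_pattern_changes by (intro card_mono) auto
  also have "\<dots> \<le> card (pattern_changes m C) + card (\<Union>p\<in>Pow (om_gates m). om_switches m C p)"
    by (rule card_Un_le)
  also have "card (\<Union>p\<in>Pow (om_gates m). om_switches m C p) \<le>
             (\<Sum>p\<in>Pow (om_gates m). card (om_switches m C p))"
    by (rule card_UN_le) (simp add: finite_om_gates)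
  also have "\<dots> \<le> card (Pow (om_gates m)) * K"
    using sum_bounded_above[of "Pow (om_gates m)" "\<lambda>p. card (om_switches m C p)" K]
      card_om_switches_within_pattern[OF ch m(1) lab] K j le_trans by fastforce
  also have "card (Pow (om_gates m)) = 2 ^ card (om_gates m)"
    by (simp add: card_Pow finite_om_gates)
  finally show ?thesis
    by simp
qed

lemma card_pattern_changes_le:
  assumes ch: "is_chain n C" and K: "\<forall>j<length om. fst (om ! j) \<le> K"
  shows "card (pattern_changes m C) + K \<le> K * 2 ^ card (om_gates m)"
proof (induction m)
  case 0
  then show ?case
    by (simp add: pattern_changes_def om_pattern_def om_gates_def)
next
  case (Suc m)
  show ?case
  proof (cases "m < length gs \<and> is_om_gate (gs ! m)")
    case False
    then have "om_gates (Suc m) = om_gates m"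
      by (rule om_gates_Suc_non_om)
    moreover from this have "om_pattern (Suc m) = om_pattern m"
      by (simp add: fun_eq_iff om_pattern_def)
    ultimately show ?thesis
      using Suc.IH by (simp add: pattern_changes_def)
  next
    case True
    then have "card (om_gates (Suc m)) = Suc (card (om_gates m))"
      using finite_om_gates by (simp add: om_gates_Suc_om) (simp add: om_gates_def)
    then show ?thesis
      using Suc.IH card_pattern_changes_Suc_le[OF ch K True[THEN conjunct1] True[THEN conjunct2]]
      by (simp add: algebra_simps)
  qed
qed

lemma jumps_subset_pattern_changes:
  assumes R: "realizes om n gs fs" and ch: "is_chain n C"
  shows "{s. Suc s < length C \<and> jumpF fs (C ! s) (C ! Suc s)} \<subseteq> pattern_changes (length gs) C"
proof (safe, rule ccontr)
  fix s assume s: "Suc s < length C" "jumpF fs (C ! s) (C ! Suc s)"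
    and "s \<notin> pattern_changes (length gs) C"
  then have same: "om_pattern (length gs) (C ! s) = om_pattern (length gs) (C ! Suc s)"
    by (simp add: pattern_changes_def)
  obtain f where f: "f \<in> set fs" "tuple_le (C ! s) (C ! Suc s)" "f (C ! s)" "\<not> f (C ! Suc s)"
    using s(2) unfolding jumpF_def jump_def by auto
  obtain v where v: "v < n + length gs" "\<And>x. length x = n \<Longrightarrow> node x v = f x"
    using R f(1) unfolding realizes_def by blast
  have "node (C ! s) v \<le> node (C ! Suc s) v"
    using node_mono_within_pattern[OF length_chain_nth[OF ch] length_chain_nth[OF ch] f(2) same v(1) v(1)]
      s(1) by simp
  then show False
    using v(2) length_chain_nth[OF ch] f(3,4) s(1) by (metis Suc_lessD le_boolE)
qed

lemma decr_chain_bound: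
  assumes "realizes om n gs fs" "is_chain n C" "\<forall>j<length om. fst (om ! j) \<le> K"
  shows "decr_chain fs C + K \<le> K * 2 ^ weight gs"
proof -
  have "decr_chain fs C \<le> card (pattern_changes (length gs) C)"
    unfolding decr_chain_def
    using jumps_subset_pattern_changes[OF assms(1,2)] finite_pattern_changes by (rule card_mono[rotated])
  then show ?thesis
    unfolding weight_eq_card_om_gates
    using card_pattern_changes_le[OF assms(2,3), of "length gs"] by linarith
qed

end

section \<open>Upper bound: computing the level bit by bit\<close>

definition level :: "(bool list \<Rightarrow> bool) list \<Rightarrow> nat \<Rightarrow> bool list \<Rightarrow> nat" where
  "level fs n x = Max {decr_chain fs C | C. is_chain n C \<and> last C = x}"

lemma level_attained:
  assumes "length x = n"
  shows "\<exists>C. is_chain n C \<and> last C = x \<and> decr_chain fs C = level fs n x"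
proof -
  have "is_chain n [x]"
    using assms by (simp add: is_chain_def)
  then have "{decr_chain fs C | C. is_chain n C \<and> last C = x} \<noteq> {}"
    by fastforce
  then have "level fs n x \<in> {decr_chain fs C | C. is_chain n C \<and> last C = x}"
    unfolding level_def using finite_decr_chains by (rule Max_in[rotated])
  then show ?thesis
    by auto
qed

lemma decr_chain_le_level: "is_chain n C \<Longrightarrow> last C = x \<Longrightarrow> decr_chain fs C \<le> level fs n x"
  unfolding level_def using finite_decr_chains[of fs n "\<lambda>C. last C = x"] by (intro Max_ge) auto

lemma level_le_decrease: "length x = n \<Longrightarrow> level fs n x \<le> decrease n fs"
  using level_attained decr_chain_le_decrease by metis

lemma is_chain_snoc:
  assumes C: "is_chain n C" and le: "tuple_le (last C) x" and ne: "last C \<noteq> x"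
    and x: "length x = n"
  shows "is_chain n (C @ [x])"
proof -
  have C_ne: "C \<noteq> []" and last: "C ! (length C - 1) = last C"
    using C by (auto simp: is_chain_def last_conv_nth)
  have "x \<notin> set C"
  proof
    assume "x \<in> set C"
    then obtain i where "i < length C" "C ! i = x"
      by (auto simp: in_set_conv_nth)
    then have "tuple_le x (last C)"
      using is_chain_nth_le[OF C, of i "length C - 1"] last by simp
    then show False
      using tuple_le_antisym[OF le] ne by simp
  qed
  moreover have "tuple_le ((C @ [x]) ! i) ((C @ [x]) ! Suc i)" if "Suc i < length (C @ [x])" for i
  proof (cases "Suc i < length C")
    case True
    then show ?thesis
      using C by (simp add: nth_append is_chain_def)
  next
    case False
    then have "i = length C - 1"
      using that by simp
    then show ?thesis
      using le last C_ne False by (simp add: nth_append)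
  qed
  ultimately show ?thesis
    using C x by (simp add: is_chain_def)
qed

lemma decr_chain_snoc:
  assumes "C \<noteq> []"
  shows "decr_chain fs (C @ [x]) = decr_chain fs C + (if jumpF fs (last C) x then 1 else 0)"
proof -
  let ?J = "{i. Suc i < length C \<and> jumpF fs (C ! i) (C ! Suc i)}"
  have "(Suc i < length (C @ [x]) \<and> jumpF fs ((C @ [x]) ! i) ((C @ [x]) ! Suc i)) \<longleftrightarrow>
        i \<in> ?J \<or> (i = length C - 1 \<and> jumpF fs (last C) x)" for i
    using assms by (cases "Suc i < length C"; cases "i = length C - 1") (auto simp: nth_append last_conv_nth)
  then have "{i. Suc i < length (C @ [x]) \<and> jumpF fs ((C @ [x]) ! i) ((C @ [x]) ! Suc i)} =
        ?J \<union> (if jumpF fs (last C) x then {length C - 1} else {})"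
    by auto
  moreover have "finite ?J"
    by (rule finite_subset[of _ "{..<length C}"]) auto
  ultimately show ?thesis
    using assms unfolding decr_chain_def by (simp add: card_insert_if)
qed

lemma level_step:
  assumes x: "length x = n" and y: "length y = n" and le: "tuple_le y x"
  shows "level fs n y + (if jumpF fs y x then 1 else 0) \<le> level fs n x"
proof (cases "y = x")
  case True
  then show ?thesis
    by (simp add: jumpF_def jump_def)
next
  case False
  obtain C where C: "is_chain n C" "last C = y" "decr_chain fs C = level fs n y"
    using level_attained[OF y] by blast
  have "is_chain n (C @ [x])"
    using is_chain_snoc[OF C(1)] C(2) le False x by simp
  moreover have "decr_chain fs (C @ [x]) = level fs n y + (if jumpF fs y x then 1 else 0)"
    using decr_chain_snoc[of C fs x] C by (simp add: is_chain_def)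
  ultimately show ?thesis
    using decr_chain_le_level[of n "C @ [x]" x fs] by simp
qed

lemma level_mono:
  "length x = n \<Longrightarrow> length y = n \<Longrightarrow> tuple_le y x \<Longrightarrow> level fs n y \<le> level fs n x"
  using level_step[of x n y fs] by simp

lemma div_pow2_diff_Suc:
  fixes v :: nat
  assumes "t < r"
  shows "v div 2 ^ (r - Suc t) = 2 * (v div 2 ^ (r - t)) + of_bool (bit v (r - Suc t))"
proof -
  obtain k where k: "r - Suc t = k" "r - t = Suc k"
    using assms by (metis Suc_diff_Suc)
  have "v div 2 ^ Suc k = v div 2 ^ k div 2"
    by (simp only: power_Suc2 div_mult2_eq)
  then show ?thesis
    unfolding k by (simp add: bit_iff_odd)
qed

lemma div_pow2_eq_of_high_bits:
  fixes u v :: nat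
  assumes le: "u \<le> v" and v: "v < 2 ^ r"
    and bits: "\<forall>s<t. bit v (r - Suc s) \<longrightarrow> bit u (r - Suc s)" and t: "t \<le> r"
  shows "u div 2 ^ (r - t) = v div 2 ^ (r - t)"
  using bits t
proof (induction t)
  case 0
  then show ?case
    using le v by simp
next
  case (Suc t)
  then have "u div 2 ^ (r - t) = v div 2 ^ (r - t)"
    by simp
  then have "v div 2 ^ (r - Suc t) \<le> u div 2 ^ (r - Suc t)"
    using div_pow2_diff_Suc[of t r u] div_pow2_diff_Suc[of t r v] Suc.prems by auto
  moreover have "u div 2 ^ (r - Suc t) \<le> v div 2 ^ (r - Suc t)"
    using le by (rule div_le_mono)
  ultimately show ?case
    by simp
qed

lemma bit_mono_of_high_bits:
  fixes u v :: nat
  assumes le: "u \<le> v" and v: "v < 2 ^ r"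
    and bits: "\<forall>s<t. bit v (r - Suc s) \<longrightarrow> bit u (r - Suc s)" and t: "t < r"
    and u_bit: "bit u (r - Suc t)"
  shows "bit v (r - Suc t)"
proof -
  have "u div 2 ^ (r - t) = v div 2 ^ (r - t)"
    using div_pow2_eq_of_high_bits[OF le v bits] t by simp
  moreover have "u div 2 ^ (r - Suc t) \<le> v div 2 ^ (r - Suc t)"
    using le by (rule div_le_mono)
  ultimately show ?thesis
    using div_pow2_diff_Suc[of t r u] div_pow2_diff_Suc[of t r v] t u_bit
    by (cases "bit v (r - Suc t)") auto
qed

lemma eq_of_high_bits:
  fixes u v :: nat
  assumes "u \<le> v" "v < 2 ^ r" "\<forall>s<r. bit v (r - Suc s) \<longrightarrow> bit u (r - Suc s)"
  shows "u = v"
  using div_pow2_eq_of_high_bits[OF assms] by simp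

locale level_bits_circuit =
  fixes om :: basis_om and n :: nat and fs :: "(bool list \<Rightarrow> bool) list" and r :: nat
    and a b :: "bool list"
  assumes om_ne: "om \<noteq> []"
    and len_a: "length a = fst (om ! 0)" and len_b: "length b = fst (om ! 0)"
    and a_le_b: "tuple_le a b" and om_a: "snd (om ! 0) a" and om_b: "\<not> snd (om ! 0) b"
    and level_less: "\<And>x. length x = n \<Longrightarrow> level fs n x < 2 ^ r"
begin

text \<open>Digit \<open>t\<close> of the level, counted from the most significant of \<open>r\<close> binary digits.\<close>

definition level_bit :: "nat \<Rightarrow> bool list \<Rightarrow> bool" where
  "level_bit t x \<longleftrightarrow> bit (level fs n x) (r - Suc t)"

definition extend :: "nat \<Rightarrow> bool list \<Rightarrow> bool list" where
  "extend t x = x @ map (\<lambda>s. \<not> level_bit s x) [0..<t]"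

definition up_closure :: "(bool list \<Rightarrow> bool) \<Rightarrow> nat \<Rightarrow> bool list \<Rightarrow> bool" where
  "up_closure P t v \<longleftrightarrow> (\<exists>y. length y = n \<and> P y \<and> tuple_le (extend t y) v)"

lemma monotone_up_closure: "monotone_fun k (up_closure P t)"
  unfolding monotone_fun_def up_closure_def using tuple_le_trans by fastforce

lemma up_closure_extend:
  assumes "length x = n"
    and "\<And>y. length y = n \<Longrightarrow> P y \<Longrightarrow> tuple_le (extend t y) (extend t x) \<Longrightarrow> P x"
  shows "up_closure P t (extend t x) = P x"
  unfolding up_closure_def using assms tuple_le_refl by blast

lemma tuple_le_extend:
  assumes "length y = n" "length x = n"
  shows "tuple_le (extend t y) (extend t x) \<longleftrightarrow>
           tuple_le y x \<and> (\<forall>s<t. level_bit s x \<longrightarrow> level_bit s y)"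
  unfolding extend_def using assms by (auto simp: tuple_le_append tuple_le_map_map)

lemma up_closure_level_bit:
  assumes x: "length x = n" and t: "t < r"
  shows "up_closure (level_bit t) t (extend t x) = level_bit t x"
proof (rule up_closure_extend[OF x])
  fix y assume y: "length y = n" "level_bit t y" "tuple_le (extend t y) (extend t x)"
  then show "level_bit t x"
    using bit_mono_of_high_bits[OF level_mono[OF x y(1)] level_less[OF x] _ t] tuple_le_extend[OF y(1) x]
    unfolding level_bit_def by blast
qed

lemma up_closure_output:
  assumes x: "length x = n" and f: "f \<in> set fs"
  shows "up_closure f r (extend r x) = f x"
proof (rule up_closure_extend[OF x])
  fix y assume y: "length y = n" "f y" "tuple_le (extend r y) (extend r x)"
  then have le: "tuple_le y x" and bits: "\<forall>s<r. level_bit s x \<longrightarrow> level_bit s y"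
    using tuple_le_extend[OF y(1) x] by auto
  have "level fs n y = level fs n x"
    using eq_of_high_bits[OF level_mono[OF x y(1) le] level_less[OF x]] bits
    unfolding level_bit_def by blast
  then have "\<not> jumpF fs y x"
    using level_step[OF x y(1) le, of fs] by (simp split: if_splits)
  then show "f x"
    using f le y(2) by (auto simp: jumpF_def jump_def)
qed

text \<open>
  Node layout of the circuit: the inputs, then the constants \<open>False\<close> and \<open>True\<close> at nodes \<open>n\<close> and
  \<open>n + 1\<close>; round \<open>t\<close> puts digit \<open>t\<close> at node \<open>n + 2 + 2t\<close> and its negation at \<open>n + 3 + 2t\<close>.
\<close>

definition extend_args :: "nat \<Rightarrow> nat list" where
  "extend_args t = [0..<n] @ map (\<lambda>s. n + 3 + 2 * s) [0..<t]"

text \<open>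
  Since \<open>a \<le> b\<close>, \<open>\<omega>\<^sub>1 a\<close> and \<open>\<not> \<omega>\<^sub>1 b\<close>, wiring the positions where \<open>a\<close> and \<open>b\<close> agree to
  constants and the others to node \<open>u\<close> makes \<open>\<omega>\<^sub>1\<close> compute the negation of node \<open>u\<close>.
\<close>

definition inverter_args :: "nat \<Rightarrow> nat list" where
  "inverter_args u = map (\<lambda>j. if a ! j = b ! j then (if a ! j then Suc n else n) else u) [0..<fst (om ! 0)]"

definition bit_round :: "nat \<Rightarrow> circuit" where
  "bit_round t = [(Mono (up_closure (level_bit t) t), extend_args t), (Om 0, inverter_args (n + 2 + 2 * t))]"

definition bit_rounds :: "nat \<Rightarrow> circuit" where
  "bit_rounds t = concat (map bit_round [0..<t])"

lemma bit_rounds_Suc: "bit_rounds (Suc t) = bit_rounds t @ bit_round t"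
  by (simp add: bit_rounds_def)

definition const_gates :: circuit where
  "const_gates = [(Mono (\<lambda>_. False), []), (Mono (\<lambda>_. True), [])]"

definition output_gates :: circuit where
  "output_gates = map (\<lambda>f. (Mono (up_closure f r), extend_args r)) fs"

definition circuit :: circuit where
  "circuit = const_gates @ bit_rounds r @ output_gates"

definition node_values :: "nat \<Rightarrow> bool list \<Rightarrow> bool list" where
  "node_values t x = x @ [False, True] @ concat (map (\<lambda>s. [level_bit s x, \<not> level_bit s x]) [0..<t])"

lemma node_values_Suc: "node_values (Suc t) x = node_values t x @ [level_bit t x, \<not> level_bit t x]"
  by (simp add: node_values_def)

lemma length_node_values: "length x = n \<Longrightarrow> length (node_values t x) = n + 2 + 2 * t"
  by (induction t) (simp_all add: node_values_def)

lemma nth_node_values_neg_bit: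
  assumes x: "length x = n"
  shows "s < t \<Longrightarrow> node_values t x ! (n + 3 + 2 * s) = (\<not> level_bit s x)"
proof (induction t)
  case (Suc t)
  then show ?case
    using length_node_values[OF x, of t]
    by (cases "s < t") (auto simp: node_values_Suc nth_append less_Suc_eq)
qed simp

lemma node_values_extend_args:
  assumes x: "length x = n" and t: "t' \<le> t"
  shows "map ((!) (node_values t x)) (extend_args t') = extend t' x"
proof -
  have "map ((!) (node_values t x)) [0..<n] = x"
    using x by (intro nth_equalityI) (auto simp: node_values_def nth_append)
  moreover have "map ((!) (node_values t x)) (map (\<lambda>s. n + 3 + 2 * s) [0..<t']) =
                 map (\<lambda>s. \<not> level_bit s x) [0..<t']"
    using nth_node_values_neg_bit[OF x] t by auto
  ultimately show ?thesis
    by (simp add: extend_args_def extend_def)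
qed

lemma om_inverter_args:
  assumes "vs ! n = False" "vs ! Suc n = True"
  shows "snd (om ! 0) (map ((!) vs) (inverter_args u)) = (\<not> vs ! u)"
proof -
  have "map ((!) vs) (inverter_args u) = (if vs ! u then b else a)"
  proof (rule nth_equalityI)
    fix j assume "j < length (map ((!) vs) (inverter_args u))"
    then have j: "j < fst (om ! 0)"
      by (simp add: inverter_args_def)
    then have "a ! j \<le> b ! j"
      using a_le_b len_a by (simp add: tuple_le_def)
    then show "map ((!) vs) (inverter_args u) ! j = (if vs ! u then b else a) ! j"
      using j assms by (cases "a ! j"; cases "b ! j") (simp_all add: inverter_args_def)
  qed (use len_a len_b in \<open>simp add: inverter_args_def\<close>)
  then show ?thesis
    using om_a om_b by simp
qed

lemma run_bit_rounds:
  assumes x: "length x = n"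
  shows "t \<le> r \<Longrightarrow> run om (bit_rounds t) (x @ [False, True]) = node_values t x"
proof (induction t)
  case 0
  then show ?case
    by (simp add: bit_rounds_def node_values_def)
next
  case (Suc t)
  let ?W = "node_values t x"
  have len: "length ?W = n + 2 + 2 * t"
    using length_node_values[OF x] .
  have bit: "apply_label om (Mono (up_closure (level_bit t) t)) (map ((!) ?W) (extend_args t)) = level_bit t x"
    using node_values_extend_args[OF x, of t t] up_closure_level_bit[OF x] Suc.prems
    by (simp add: apply_label_def)
  have "(?W @ [level_bit t x]) ! n = False" "(?W @ [level_bit t x]) ! Suc n = True"
    using len x by (simp_all add: nth_append node_values_def)
  then have neg: "apply_label om (Om 0) (map ((!) (?W @ [level_bit t x])) (inverter_args (n + 2 + 2 * t))) =
                  (\<not> level_bit t x)"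
    using om_inverter_args len by (simp add: apply_label_def nth_append)
  have "run om (bit_rounds (Suc t)) (x @ [False, True]) = run om (bit_round t) ?W"
    using Suc by (simp add: bit_rounds_Suc run_append)
  also have "\<dots> = node_values (Suc t) x"
    using bit neg by (simp add: bit_round_def node_values_Suc)
  finally show ?case .
qed

lemma run_circuit:
  assumes x: "length x = n"
  shows "run om circuit x = node_values r x @ map (\<lambda>f. f x) fs"
proof -
  have "\<forall>g\<in>set output_gates. \<forall>i\<in>set (snd g). i < length (node_values r x)"
    using length_node_values[OF x] by (auto simp: output_gates_def extend_args_def)
  moreover have "map (\<lambda>g. apply_label om (fst g) (map ((!) (node_values r x)) (snd g))) output_gates =
                 map (\<lambda>f. f x) fs"
    using node_values_extend_args[OF x, of r r] up_closure_output[OF x]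
    by (auto simp: output_gates_def apply_label_def)
  ultimately have "run om output_gates (node_values r x) = node_values r x @ map (\<lambda>f. f x) fs"
    by (simp add: run_independent_gates)
  then show ?thesis
    using run_bit_rounds[OF x] by (simp add: circuit_def run_append const_gates_def apply_label_def)
qed

lemma length_bit_rounds: "length (bit_rounds t) = 2 * t"
  by (induction t) (simp_all add: bit_rounds_Suc bit_round_def, simp add: bit_rounds_def)

lemma circuit_realizes: "realizes om n circuit fs"
  unfolding realizes_def
proof
  fix f assume "f \<in> set fs"
  then obtain i where i: "i < length fs" "fs ! i = f"
    by (auto simp: in_set_conv_nth)
  have "n + 2 + 2 * r + i < n + length circuit"
    using i by (simp add: circuit_def const_gates_def length_bit_rounds output_gates_def)
  moreover have "run om circuit x ! (n + 2 + 2 * r + i) = f x" if "length x = n" for x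
    using i that by (simp add: run_circuit length_node_values nth_append)
  ultimately show "\<exists>v<n + length circuit. \<forall>x. length x = n \<longrightarrow> run om circuit x ! v = f x"
    by blast
qed

lemma weight_circuit: "weight circuit = r"
proof -
  have "weight (bit_rounds t) = t" for t
    by (induction t) (simp_all add: bit_rounds_Suc weight_append bit_round_def weight_def,
        simp add: bit_rounds_def weight_def)
  then show ?thesis
    by (simp add: circuit_def weight_append const_gates_def output_gates_def weight_def)
qed

lemma valid_bit_rounds: "valid_circuit om (n + 2) (bit_rounds t)"
proof (induction t)
  case (Suc t)
  have "valid_gate om (n + 2 + 2 * t) (Mono (up_closure (level_bit t) t), extend_args t)"
    by (auto simp: valid_gate_def extend_args_def monotone_up_closure)
  moreover have "valid_gate om (Suc (n + 2 + 2 * t)) (Om 0, inverter_args (n + 2 + 2 * t))"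
    using om_ne by (auto simp: valid_gate_def inverter_args_def)
  ultimately have "valid_circuit om (n + 2 + 2 * t) (bit_round t)"
    by (simp add: bit_round_def valid_circuit_Cons valid_circuit_Nil)
  then show ?case
    using Suc by (simp add: bit_rounds_Suc valid_circuit_append length_bit_rounds)
qed (simp add: bit_rounds_def valid_circuit_Nil)

lemma valid_circuit: "valid_circuit om n circuit"
proof -
  have "valid_circuit om n const_gates"
    by (simp add: const_gates_def valid_circuit_Cons valid_circuit_Nil valid_gate_def monotone_fun_def)
  moreover have "valid_circuit om (n + 2 + 2 * r) output_gates"
    by (rule valid_circuit_if_gates_valid)
      (auto simp: output_gates_def valid_gate_def extend_args_def monotone_up_closure)
  ultimately show ?thesis
    using valid_bit_rounds[of r] unfolding circuit_def valid_circuit_append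
    by (simp add: length_bit_rounds const_gates_def)
qed

end

lemma exists_circuit_if_decrease_less:
  assumes om: "om \<noteq> []" and nonmono: "\<not> monotone_fun (fst (om ! 0)) (snd (om ! 0))"
    and d: "decrease n fs < 2 ^ r"
  shows "\<exists>gs. valid_circuit om n gs \<and> realizes om n gs fs \<and> weight gs = r"
proof -
  obtain a b where "length a = fst (om ! 0)" "length b = fst (om ! 0)" "tuple_le a b"
      "snd (om ! 0) a" "\<not> snd (om ! 0) b"
    using nonmono unfolding monotone_fun_def by (metis le_boolI)
  moreover have "level fs n x < 2 ^ r" if "length x = n" for x
    using level_le_decrease[OF that] d by (rule le_less_trans)
  ultimately interpret level_bits_circuit om n fs r a b
    using om by unfold_locales
  show ?thesis
    using valid_circuit circuit_realizes weight_circuit by blast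
qed

lemma inv_complexity_le:
  "valid_circuit om n gs \<Longrightarrow> realizes om n gs fs \<Longrightarrow> inv_complexity om n fs \<le> weight gs"
  unfolding inv_complexity_def by (rule Least_le) blast

lemma decrease_bound_inv_complexity:
  assumes "valid_circuit om n gs" "realizes om n gs fs" and K: "\<forall>j<length om. fst (om ! j) \<le> K"
  shows "decrease n fs + K \<le> K * 2 ^ inv_complexity om n fs"
proof -
  obtain gs' where gs': "valid_circuit om n gs'" "realizes om n gs' fs"
      "weight gs' = inv_complexity om n fs"
    using LeastI_ex[of "\<lambda>w. \<exists>gs. valid_circuit om n gs \<and> realizes om n gs fs \<and> weight gs = w"] assms(1,2)
    unfolding inv_complexity_def by blast
  obtain C where "is_chain n C" "decr_chain fs C = decrease n fs"
    using decrease_attained by blast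
  then show ?thesis
    using valid_circ.decr_chain_bound[OF _ gs'(2) _ K] gs'(1,3) valid_circ.intro by metis
qed

lemma less_two_pow_ceiling_log: "d < 2 ^ nat \<lceil>log 2 (real d + 1)\<rceil>"
proof -
  have "real d + 1 \<le> 2 ^ nat \<lceil>log 2 (real d + 1)\<rceil>"
    by (rule power_of_nat_log_ge) simp
  then show ?thesis
    by (simp add: nat_less_real_le)
qed

lemma ceiling_log_le:
  assumes "d + 1 \<le> 2 ^ w"
  shows "\<lceil>log 2 (real d + 1)\<rceil> \<le> int w"
proof -
  have "log 2 (real (d + 1)) \<le> real w"
    using assms by (rule log2_of_power_le) simp
  then show ?thesis
    by (simp add: ceiling_le_iff add.commute)
qed

lemma ceiling_log_nonneg: "0 \<le> \<lceil>log 2 (real d + 1)\<rceil>"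
proof -
  have "0 \<le> log 2 (real d + 1)"
    by simp
  then show ?thesis
    by (metis ceiling_mono ceiling_zero)
qed

lemma inv_complexity_le_ceiling_log:
  assumes "om \<noteq> []" "\<not> monotone_fun (fst (om ! 0)) (snd (om ! 0))"
  shows "int (inv_complexity om n fs) \<le> \<lceil>log 2 (real (decrease n fs) + 1)\<rceil>"
proof -
  obtain gs where gs: "valid_circuit om n gs" "realizes om n gs fs"
      "weight gs = nat \<lceil>log 2 (real (decrease n fs) + 1)\<rceil>"
    using exists_circuit_if_decrease_less[OF assms less_two_pow_ceiling_log] by blast
  then show ?thesis
    using inv_complexity_le[OF gs(1,2)] ceiling_log_nonneg[of "decrease n fs"] by linarith
qed

lemma ceiling_log_le_inv_complexity:
  assumes "om \<noteq> []" "\<not> monotone_fun (fst (om ! 0)) (snd (om ! 0))"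
    and K: "1 \<le> K" "\<forall>j<length om. fst (om ! j) \<le> K"
  shows "\<lceil>log 2 (real (decrease n fs) + 1)\<rceil> - int K \<le> int (inv_complexity om n fs)"
proof -
  obtain gs where gs: "valid_circuit om n gs" "realizes om n gs fs"
    using exists_circuit_if_decrease_less[OF assms(1,2) less_two_pow_ceiling_log] by blast
  have "decrease n fs + 1 \<le> decrease n fs + K"
    using K(1) by simp
  also have "\<dots> \<le> K * 2 ^ inv_complexity om n fs"
    using decrease_bound_inv_complexity[OF gs K(2)] by simp
  also have "\<dots> \<le> 2 ^ (inv_complexity om n fs + K)"
    by (simp add: power_add less_imp_le)
  finally show ?thesis
    using ceiling_log_le by fastforce
qed

theorem theorem1:
  fixes om :: basis_om
  assumes "om \<noteq> []"
    and "\<forall>(k, w)\<in>set om. \<not> monotone_fun k w"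
  shows "\<exists>c::int. \<forall>(n::nat) (fs :: (bool list \<Rightarrow> bool) list).
           \<lceil>log 2 (real (decrease n fs) + 1)\<rceil> - c \<le> int (inv_complexity om n fs) \<and>
           int (inv_complexity om n fs) \<le> \<lceil>log 2 (real (decrease n fs) + 1)\<rceil>"
proof -
  have "om ! 0 \<in> set om"
    using assms(1) by simp
  then have nonmono: "\<not> monotone_fun (fst (om ! 0)) (snd (om ! 0))"
    using assms(2) by (simp add: case_prod_beta)
  define K where "K = Suc (Max (fst ` set om))"
  have "1 \<le> K" "\<forall>j<length om. fst (om ! j) \<le> K"
    unfolding K_def by (auto intro!: le_SucI Max_ge)
  then show ?thesis
    using ceiling_log_le_inv_complexity[OF assms(1) nonmono] inv_complexity_le_ceiling_log[OF assms(1) nonmono]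
    by blast
qed

end
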